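(* Let $c\in\mathbb{R}$, $\beta\geq0$, $q\in(0,1)$, and let $J:\mathbb{Z}\to\mathbb{R}$ satisfy $$\sum_{i=-\infty}^0 \left(1+q^{2(i-c)}\frac{e^{\beta J(i-1)}}{e^{\beta |J(i)|}+q^2 e^{\beta |J(i-2)|}}\right)^{-1} + \sum_{i=1}^\infty \left(1+q^{-2(i-c)}\frac{e^{\beta J(i-1)}}{e^{\beta |J(i)|}+q^{-2} e^{\beta |J(i-2)|}}\right)^{-1}<\infty.$$ Then for every $n\in\mathbb{Z}$, $$\mu_{J}^c(\{N=n\}) = q^{-2nc + n(n+1)}\,\mu_{J}^c\Big(\mathbb{1}_{\{N=0\}}e^{-\beta H^{(n)}_{J}}\Big),\qquad\text{where } H_{J}^{(n)}(\sigma) = \sum_{i\in\mathbb Z} \big(J(i+n) - J(i)\big)\mathbb{1}_{\{\sigma_{i}\neq \sigma_{i+1}\}}.$$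
   Context: Spin configurations are $\sigma\in\{-1,+1\}^{\mathbb{Z}}$. Let $\mathcal{B}$ be the set of configurations for which there exist $a,b\in\mathbb{Z}$ with $\sigma_{a-i}=-1$ and $\sigma_{b+i}=+1$ for all $i\in\mathbb{N}$. The Hamiltonian is $H_J(\sigma)=\sum_{i\in\mathbb{Z}}J(i)\mathbb{1}_{\{\sigma_i\neq\sigma_{i+1}\}}$ and $f_c(\sigma)=2\sum_{i=1}^\infty(i-c)\mathbb{1}_{\{\sigma_i=-1\}}-2\sum_{i=-\infty}^0(i-c)\mathbb{1}_{\{\sigma_i=1\}}$. The probability measure $\mu^c_J$ is given by $\mu^c_J(\sigma)=e^{-\beta H_J(\sigma)}q^{f_c(\sigma)}/Z^J_{\beta,q,c}$ with $Z^J_{\beta,q,c}=\sum_\sigma e^{-\beta H_J(\sigma)}q^{f_c(\sigma)}$; under the displayed summability condition it is concentrated on $\mathcal{B}$. For $\sigma\in\mathcal{B}$ let $N_+(\sigma)=\#\{i\leq 0:\sigma_i=+1\}$, $N_-(\sigma)=\#\{i\geq1:\sigma_i=-1\}$ (both finite), and $N(\sigma)=N_-(\sigma)-N_+(\sigma)$. For a function $F$, $\mu^c_J(F)$ denotes the expectation of $F$ under $\mu^c_J$. *)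

theory Defs
  imports "HOL-Analysis.Analysis"
begin

type_synonym config = "int \<Rightarrow> int"

definition spin_configs :: "config set" where
  "spin_configs = {\<sigma>. \<forall>i. \<sigma> i = -1 \<or> \<sigma> i = 1}"

definition Bset :: "config set" where
  "Bset = {\<sigma>\<in>spin_configs. \<exists>a b. \<forall>i::nat. \<sigma> (a - int i) = -1 \<and> \<sigma> (b + int i) = 1}"

text \<open>Hamiltonian (a finite sum for configurations in B).\<close>
definition H :: "(int \<Rightarrow> real) \<Rightarrow> config \<Rightarrow> real" where
  "H J \<sigma> = (\<Sum>i\<in>{i. \<sigma> i \<noteq> \<sigma> (i+1)}. J i)"

definition Hn :: "(int \<Rightarrow> real) \<Rightarrow> int \<Rightarrow> config \<Rightarrow> real" where
  "Hn J n \<sigma> = (\<Sum>i\<in>{i. \<sigma> i \<noteq> \<sigma> (i+1)}. J (i + n) - J i)"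

definition fc :: "real \<Rightarrow> config \<Rightarrow> real" where
  "fc c \<sigma> = 2 * (\<Sum>i\<in>{i. i \<ge> 1 \<and> \<sigma> i = -1}. (real_of_int i - c))
             - 2 * (\<Sum>i\<in>{i. i \<le> 0 \<and> \<sigma> i = 1}. (real_of_int i - c))"

definition Nplus :: "config \<Rightarrow> nat" where
  "Nplus \<sigma> = card {i. i \<le> 0 \<and> \<sigma> i = 1}"

definition Nminus :: "config \<Rightarrow> nat" where
  "Nminus \<sigma> = card {i. i \<ge> 1 \<and> \<sigma> i = -1}"

definition Ncount :: "config \<Rightarrow> int" where
  "Ncount \<sigma> = int (Nminus \<sigma>) - int (Nplus \<sigma>)"

definition weight :: "real \<Rightarrow> real \<Rightarrow> real \<Rightarrow> (int \<Rightarrow> real) \<Rightarrow> config \<Rightarrow> real" where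
  "weight \<beta> q c J \<sigma> = exp (- \<beta> * H J \<sigma>) * q powr (fc c \<sigma>)"

definition Zpart :: "real \<Rightarrow> real \<Rightarrow> real \<Rightarrow> (int \<Rightarrow> real) \<Rightarrow> real" where
  "Zpart \<beta> q c J = (\<Sum>\<^sub>\<infinity>\<sigma>\<in>Bset. weight \<beta> q c J \<sigma>)"

definition mu_exp :: "real \<Rightarrow> real \<Rightarrow> real \<Rightarrow> (int \<Rightarrow> real) \<Rightarrow> (config \<Rightarrow> real) \<Rightarrow> real" where
  "mu_exp \<beta> q c J F = (\<Sum>\<^sub>\<infinity>\<sigma>\<in>Bset. weight \<beta> q c J \<sigma> * F \<sigma>) / Zpart \<beta> q c J"

definition mu_prob :: "real \<Rightarrow> real \<Rightarrow> real \<Rightarrow> (int \<Rightarrow> real) \<Rightarrow> config set \<Rightarrow> real" where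
  "mu_prob \<beta> q c J A = mu_exp \<beta> q c J (indicator A)"

end

theory Submission
  imports Defs
begin

text \<open>Translating a configuration by \<open>n\<close> maps \<open>B \<inter> {N = 0}\<close> bijectively onto
  \<open>B \<inter> {N = n}\<close>. A unit translation raises \<open>N\<close> by one and \<open>f\<^sub>c\<close> by \<open>2N + 2 - 2c\<close>,
  so translating a configuration with \<open>N = 0\<close> by \<open>n\<close> adds \<open>n(n+1) - 2nc\<close> to \<open>f\<^sub>c\<close>,
  while it adds \<open>Hn J n\<close> to the Hamiltonian. Reindexing the sum defining \<open>\<mu>\<close> along this
  bijection gives the identity. Of the hypotheses only \<open>q > 0\<close> is used: both sides carry the
  same normalisation \<open>Z\<close>, and reindexing an infinite sum along a bijection needs no
  summability.\<close>

definition shift :: "int \<Rightarrow> config \<Rightarrow> config" where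
  "shift n \<sigma> = (\<lambda>i. \<sigma> (i - n))"

lemma shift_shift: "shift m (shift n \<sigma>) = shift (m + n) \<sigma>"
  by (simp add: shift_def algebra_simps)

lemma shift_0 [simp]: "shift 0 \<sigma> = \<sigma>"
  by (simp add: shift_def)

lemma all_nat_down_iff: "(\<forall>k::nat. P (a - int k)) \<longleftrightarrow> (\<forall>i\<le>a. P i)"
proof (intro iffI allI impI)
  fix i assume "\<forall>k::nat. P (a - int k)" and "i \<le> a"
  then show "P i"
    by (drule_tac x = "nat (a - i)" in spec) simp
qed simp

lemma all_nat_up_iff: "(\<forall>k::nat. P (b + int k)) \<longleftrightarrow> (\<forall>i\<ge>b. P i)"
proof (intro iffI allI impI)
  fix i assume "\<forall>k::nat. P (b + int k)" and "b \<le> i"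
  then show "P i"
    by (drule_tac x = "nat (i - b)" in spec) simp
qed simp

lemma Bset_iff_eventually_const:
  "\<sigma> \<in> Bset \<longleftrightarrow> \<sigma> \<in> spin_configs \<and> (\<exists>a b. (\<forall>i\<le>a. \<sigma> i = -1) \<and> (\<forall>i\<ge>b. \<sigma> i = 1))"
  using all_nat_down_iff[where P = "\<lambda>i. \<sigma> i = -1"] all_nat_up_iff[where P = "\<lambda>i. \<sigma> i = 1"]
  by (simp add: Bset_def all_conj_distrib)

lemma shift_in_Bset:
  assumes "\<sigma> \<in> Bset"
  shows "shift n \<sigma> \<in> Bset"
proof -
  obtain a b where "\<forall>i\<le>a. \<sigma> i = -1" and "\<forall>i\<ge>b. \<sigma> i = 1" and "\<sigma> \<in> spin_configs"
    using assms unfolding Bset_iff_eventually_const by blast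
  then have "(\<forall>i\<le>a + n. shift n \<sigma> i = -1) \<and> (\<forall>i\<ge>b + n. shift n \<sigma> i = 1)"
    and "shift n \<sigma> \<in> spin_configs"
    by (simp_all add: shift_def spin_configs_def)
  then show ?thesis
    unfolding Bset_iff_eventually_const by blast
qed

lemma Bset_finite_misplaced:
  assumes "\<sigma> \<in> Bset"
  shows "finite {i. i \<ge> 1 \<and> \<sigma> i = -1}" and "finite {i. i \<le> 0 \<and> \<sigma> i = 1}"
proof -
  obtain a b where a: "\<And>i. i \<le> a \<Longrightarrow> \<sigma> i = -1" and b: "\<And>i. i \<ge> b \<Longrightarrow> \<sigma> i = 1"
    using assms unfolding Bset_iff_eventually_const by blast
  have "{i. i \<ge> 1 \<and> \<sigma> i = -1} \<subseteq> {1..<b}"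
    using b by (force simp: not_less[symmetric])
  then show "finite {i. i \<ge> 1 \<and> \<sigma> i = -1}"
    by (rule finite_subset) simp
  have "{i. i \<le> 0 \<and> \<sigma> i = 1} \<subseteq> {a<..0}"
    using a by (force simp: not_less[symmetric])
  then show "finite {i. i \<le> 0 \<and> \<sigma> i = 1}"
    by (rule finite_subset) simp
qed

text \<open>Both \<open>N\<close> and \<open>f\<^sub>c / 2\<close> are sums of this form, so the effect of a translation
  on them is computed once.\<close>

definition misplaced_sum :: "(int \<Rightarrow> real) \<Rightarrow> config \<Rightarrow> real" where
  "misplaced_sum g \<sigma> = (\<Sum>i\<in>{i. i \<ge> 1 \<and> \<sigma> i = -1}. g i) - (\<Sum>i\<in>{i. i \<le> 0 \<and> \<sigma> i = 1}. g i)"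

lemma Ncount_eq_misplaced_sum:
  "\<sigma> \<in> Bset \<Longrightarrow> real_of_int (Ncount \<sigma>) = misplaced_sum (\<lambda>_. 1) \<sigma>"
  by (simp add: Ncount_def Nminus_def Nplus_def misplaced_sum_def)

lemma fc_eq_misplaced_sum: "fc c \<sigma> = 2 * misplaced_sum (\<lambda>i. real_of_int i - c) \<sigma>"
  by (simp add: fc_def misplaced_sum_def)

lemma misplaced_sum_add_const:
  assumes "\<sigma> \<in> Bset"
  shows "misplaced_sum (\<lambda>i. g i + a) \<sigma> = misplaced_sum g \<sigma> + a * Ncount \<sigma>"
  using Bset_finite_misplaced[OF assms]
  by (simp add: misplaced_sum_def Ncount_def Nminus_def Nplus_def sum.distrib algebra_simps)

lemma misplaced_sum_cut_at_minus_one: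
  assumes "\<sigma> \<in> Bset"
  shows "(\<Sum>i\<in>{i. i \<ge> 0 \<and> \<sigma> i = -1}. h i) - (\<Sum>i\<in>{i. i \<le> -1 \<and> \<sigma> i = 1}. h i)
    = misplaced_sum h \<sigma> + h 0"
proof -
  note fin = Bset_finite_misplaced[OF assms]
  have "\<sigma> 0 = -1 \<or> \<sigma> 0 = 1"
    using assms by (simp add: Bset_def spin_configs_def)
  then show ?thesis
  proof
    assume "\<sigma> 0 = -1"
    then have "{i. i \<ge> 0 \<and> \<sigma> i = -1} = insert 0 {i. i \<ge> 1 \<and> \<sigma> i = -1}"
      and "{i. i \<le> -1 \<and> \<sigma> i = 1} = {i. i \<le> 0 \<and> \<sigma> i = 1}"
      by (auto simp: le_less)
    with fin show ?thesis
      by (simp add: misplaced_sum_def)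
  next
    assume "\<sigma> 0 = 1"
    then have "{i. i \<ge> 0 \<and> \<sigma> i = -1} = {i. i \<ge> 1 \<and> \<sigma> i = -1}"
      and "{i. i \<le> 0 \<and> \<sigma> i = 1} = insert 0 {i. i \<le> -1 \<and> \<sigma> i = 1}"
      by (auto simp: le_less)
    with fin show ?thesis
      by (simp add: misplaced_sum_def)
  qed
qed

lemma misplaced_sum_shift_1:
  assumes "\<sigma> \<in> Bset"
  shows "misplaced_sum g (shift 1 \<sigma>) = misplaced_sum (\<lambda>i. g (i + 1)) \<sigma> + g 1"
proof -
  have "(\<Sum>i\<in>{i. i \<ge> 1 \<and> shift 1 \<sigma> i = -1}. g i) = (\<Sum>i\<in>{i. i \<ge> 0 \<and> \<sigma> i = -1}. g (i + 1))"
    and "(\<Sum>i\<in>{i. i \<le> 0 \<and> shift 1 \<sigma> i = 1}. g i) = (\<Sum>i\<in>{i. i \<le> -1 \<and> \<sigma> i = 1}. g (i + 1))"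
    by (rule sum.reindex_bij_witness[of _ "\<lambda>i. i + 1" "\<lambda>i. i - 1"]; auto simp: shift_def)+
  then show ?thesis
    using misplaced_sum_cut_at_minus_one[OF assms, of "\<lambda>i. g (i + 1)"]
    by (simp add: misplaced_sum_def[of g])
qed

lemma Ncount_shift_1:
  assumes "\<sigma> \<in> Bset"
  shows "Ncount (shift 1 \<sigma>) = Ncount \<sigma> + 1"
proof -
  have "real_of_int (Ncount (shift 1 \<sigma>)) = real_of_int (Ncount \<sigma> + 1)"
    using assms shift_in_Bset
    by (simp add: Ncount_eq_misplaced_sum misplaced_sum_shift_1)
  then show ?thesis
    by linarith
qed

lemma fc_shift_1:
  assumes "\<sigma> \<in> Bset"
  shows "fc c (shift 1 \<sigma>) = fc c \<sigma> + 2 * Ncount \<sigma> + 2 - 2 * c"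
proof -
  have "misplaced_sum (\<lambda>i. real_of_int (i + 1) - c) \<sigma>
      = misplaced_sum (\<lambda>i. real_of_int i - c) \<sigma> + Ncount \<sigma>"
    using misplaced_sum_add_const[OF assms, of "\<lambda>i. real_of_int i - c" 1]
    by (simp add: algebra_simps)
  then show ?thesis
    using assms by (simp add: fc_eq_misplaced_sum misplaced_sum_shift_1)
qed

lemma Ncount_shift:
  assumes "\<sigma> \<in> Bset"
  shows "Ncount (shift n \<sigma>) = Ncount \<sigma> + n"
proof (induction n rule: int_induct[where k = 0])
  case (step1 n)
  then show ?case
    using Ncount_shift_1[OF shift_in_Bset[OF assms, of n]] by (simp add: shift_shift add.commute)
next
  case (step2 n)
  then show ?case
    using Ncount_shift_1[OF shift_in_Bset[OF assms, of "n - 1"]] by (simp add: shift_shift)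
qed simp

lemma fc_shift:
  assumes "\<sigma> \<in> Bset"
  shows "fc c (shift n \<sigma>) = fc c \<sigma> + 2 * n * Ncount \<sigma> + n * (n + 1) - 2 * n * c"
proof (induction n rule: int_induct[where k = 0])
  case (step1 n)
  have "fc c (shift (n + 1) \<sigma>) = fc c (shift n \<sigma>) + 2 * Ncount (shift n \<sigma>) + 2 - 2 * c"
    using fc_shift_1[OF shift_in_Bset[OF assms, of n]] by (simp add: shift_shift add.commute)
  with step1(2) show ?case
    unfolding Ncount_shift[OF assms] by (simp add: algebra_simps)
next
  case (step2 n)
  have "fc c (shift n \<sigma>) = fc c (shift (n - 1) \<sigma>) + 2 * Ncount (shift (n - 1) \<sigma>) + 2 - 2 * c"
    using fc_shift_1[OF shift_in_Bset[OF assms, of "n - 1"]] by (simp add: shift_shift)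
  with step2(2) show ?case
    unfolding Ncount_shift[OF assms] by (simp add: algebra_simps)
qed simp

lemma H_shift: "H J (shift n \<sigma>) = H J \<sigma> + Hn J n \<sigma>"
proof -
  have "H J (shift n \<sigma>) = (\<Sum>i\<in>{i. \<sigma> i \<noteq> \<sigma> (i + 1)}. J (i + n))"
    unfolding H_def
    by (rule sum.reindex_bij_witness[of _ "\<lambda>i. i + n" "\<lambda>i. i - n"])
      (auto simp: shift_def algebra_simps)
  then show ?thesis
    by (simp add: H_def Hn_def sum_subtractf)
qed

lemma weight_shift:
  assumes "\<sigma> \<in> Bset" and "Ncount \<sigma> = 0" and "0 < q"
  shows "weight \<beta> q c J (shift n \<sigma>)
    = q powr (- 2 * real_of_int n * c + real_of_int (n * (n + 1)))
      * (weight \<beta> q c J \<sigma> * exp (- \<beta> * Hn J n \<sigma>))"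
proof -
  have fc: "fc c (shift n \<sigma>) = fc c \<sigma> + (- 2 * real_of_int n * c + real_of_int (n * (n + 1)))"
    using fc_shift[OF assms(1), of c n] assms(2) by simp
  show ?thesis
    unfolding weight_def H_shift fc powr_add
    by (simp add: exp_add[symmetric] algebra_simps)
qed

lemma shift_bij_betw_Ncount:
  "bij_betw (shift n) (Bset \<inter> {\<sigma>. Ncount \<sigma> = m}) (Bset \<inter> {\<sigma>. Ncount \<sigma> = m + n})"
proof (rule bij_betw_byWitness[where f' = "shift (- n)"])
  show "shift n ` (Bset \<inter> {\<sigma>. Ncount \<sigma> = m}) \<subseteq> Bset \<inter> {\<sigma>. Ncount \<sigma> = m + n}"
    and "shift (- n) ` (Bset \<inter> {\<sigma>. Ncount \<sigma> = m + n}) \<subseteq> Bset \<inter> {\<sigma>. Ncount \<sigma> = m}"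
    by (auto simp: shift_in_Bset Ncount_shift)
qed (simp_all add: shift_shift)

lemma infsum_weight_Ncount:
  assumes "0 < q"
  shows "(\<Sum>\<^sub>\<infinity>\<sigma>\<in>Bset \<inter> {\<sigma>. Ncount \<sigma> = n}. weight \<beta> q c J \<sigma>)
    = q powr (- 2 * real_of_int n * c + real_of_int (n * (n + 1)))
      * (\<Sum>\<^sub>\<infinity>\<sigma>\<in>Bset \<inter> {\<sigma>. Ncount \<sigma> = 0}. weight \<beta> q c J \<sigma> * exp (- \<beta> * Hn J n \<sigma>))"
proof -
  have "(\<Sum>\<^sub>\<infinity>\<sigma>\<in>Bset \<inter> {\<sigma>. Ncount \<sigma> = n}. weight \<beta> q c J \<sigma>)
      = (\<Sum>\<^sub>\<infinity>\<sigma>\<in>Bset \<inter> {\<sigma>. Ncount \<sigma> = 0}. weight \<beta> q c J (shift n \<sigma>))"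
    using infsum_reindex_bij_betw[OF shift_bij_betw_Ncount[of n 0], of "weight \<beta> q c J"] by simp
  also have "\<dots> = (\<Sum>\<^sub>\<infinity>\<sigma>\<in>Bset \<inter> {\<sigma>. Ncount \<sigma> = 0}.
      q powr (- 2 * real_of_int n * c + real_of_int (n * (n + 1)))
      * (weight \<beta> q c J \<sigma> * exp (- \<beta> * Hn J n \<sigma>)))"
    using assms by (intro infsum_cong) (simp add: weight_shift)
  finally show ?thesis
    by (simp add: infsum_cmult_right')
qed

theorem lemma2p6:
  fixes c \<beta> q :: real and J :: "int \<Rightarrow> real" and n :: int
  assumes "\<beta> \<ge> 0" and "0 < q" and "q < 1"
    and "(\<lambda>i::int. inverse (1 + q powr (2 * (real_of_int i - c)) *
            exp (\<beta> * J (i - 1)) / (exp (\<beta> * \<bar>J i\<bar>) + q\<^sup>2 * exp (\<beta> * \<bar>J (i - 2)\<bar>))))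
          summable_on {..0}"
    and "(\<lambda>i::int. inverse (1 + q powr (- 2 * (real_of_int i - c)) *
            exp (\<beta> * J (i - 1)) / (exp (\<beta> * \<bar>J i\<bar>) + q powr (-2) * exp (\<beta> * \<bar>J (i - 2)\<bar>))))
          summable_on {1..}"
  shows "mu_prob \<beta> q c J {\<sigma>. Ncount \<sigma> = n}
       = q powr (- 2 * real_of_int n * c + real_of_int (n * (n + 1)))
         * mu_exp \<beta> q c J (\<lambda>\<sigma>. indicator {\<sigma>. Ncount \<sigma> = 0} \<sigma> * exp (- \<beta> * Hn J n \<sigma>))"
proof -
  have "(\<Sum>\<^sub>\<infinity>\<sigma>\<in>Bset. weight \<beta> q c J \<sigma> * indicator {\<sigma>. Ncount \<sigma> = n} \<sigma>)
      = (\<Sum>\<^sub>\<infinity>\<sigma>\<in>Bset \<inter> {\<sigma>. Ncount \<sigma> = n}. weight \<beta> q c J \<sigma>)"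
    by (rule infsum_cong_neutral) auto
  moreover have "(\<Sum>\<^sub>\<infinity>\<sigma>\<in>Bset. weight \<beta> q c J \<sigma>
        * (indicator {\<sigma>. Ncount \<sigma> = 0} \<sigma> * exp (- \<beta> * Hn J n \<sigma>)))
      = (\<Sum>\<^sub>\<infinity>\<sigma>\<in>Bset \<inter> {\<sigma>. Ncount \<sigma> = 0}. weight \<beta> q c J \<sigma> * exp (- \<beta> * Hn J n \<sigma>))"
    by (rule infsum_cong_neutral) auto
  ultimately show ?thesis
    unfolding mu_prob_def mu_exp_def infsum_weight_Ncount[OF \<open>0 < q\<close>] by simp
qed

end
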